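(* Let $0<\alpha<1$ and for integers $t\ge 1$ define $$S(t)\triangleq\sum_{i=1}^{t-1}\frac{\alpha^{t-i}}{i+1}$$ (so $S(1)=0$). Let $t_0=\left\lceil \frac{2\alpha}{1-\alpha}\right\rceil$ and $A=\max\left\{t_0\, S(t_0),\ \frac{2\alpha}{1-\alpha}\right\}$. Then for all integers $t\ge t_0$, $$S(t)\le \frac{A}{t}.$$
   Context: In the paper, $\alpha=(1-\eta\mu)^E$ is the contraction factor of $E$ gradient-descent steps with step size $\eta\in(0,\frac{2}{\mu+L}]$ on a $\mu$-strongly convex, $L$-smooth function. *)

theory Defs
  imports Complex_Main
begin

definition S :: "real \<Rightarrow> nat \<Rightarrow> real" where
  "S \<alpha> t = (\<Sum>i=1..t-1. \<alpha> ^ (t - i) / (real i + 1))"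

end

theory Submission
  imports Defs
begin

text \<open>Peeling off the last summand gives the recursion \<open>S(t+1) = \<alpha> S(t) + \<alpha>/(t+1)\<close>.
  The bound \<open>S(t) \<le> A/t\<close> then propagates from \<open>t\<close> to \<open>t+1\<close> as soon as
  \<open>t \<ge> 2\<alpha>/(1-\<alpha>)\<close>: the required inequality \<open>\<alpha>A/t + \<alpha>/(t+1) \<le> A/(t+1)\<close> amounts to
  \<open>A((1-\<alpha>)t - \<alpha>) \<ge> \<alpha>t\<close>, which holds because \<open>(1-\<alpha>)t - \<alpha> \<ge> (1-\<alpha>)t/2\<close> and
  \<open>A \<ge> 2\<alpha>/(1-\<alpha>)\<close>. The choice of \<open>A\<close> makes the bound true at \<open>t\<^sub>0\<close>, and induction does the rest.\<close>

lemma S_Suc: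
  assumes "n \<ge> 1"
  shows "S \<alpha> (Suc n) = \<alpha> * S \<alpha> n + \<alpha> / (real n + 1)"
proof -
  obtain m where "n = Suc m" using assms by (cases n) auto
  then have "S \<alpha> (Suc n) = (\<Sum>i=1..n-1. \<alpha> ^ (Suc n - i) / (real i + 1)) + \<alpha> / (real n + 1)"
    by (simp add: S_def sum.cl_ivl_Suc)
  also have "(\<Sum>i=1..n-1. \<alpha> ^ (Suc n - i) / (real i + 1))
      = (\<Sum>i=1..n-1. \<alpha> * (\<alpha> ^ (n - i) / (real i + 1)))"
    by (rule sum.cong) (auto simp: Suc_diff_le)
  also have "\<dots> = \<alpha> * S \<alpha> n"
    by (simp add: S_def sum_distrib_left)
  finally show ?thesis .
qed

lemma S_Suc_le_if_S_le:
  fixes \<alpha> A :: real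
  assumes "0 \<le> \<alpha>" "\<alpha> < 1" "n \<ge> 1"
    and n_large: "2 * \<alpha> / (1 - \<alpha>) \<le> real n"
    and A_large: "2 * \<alpha> / (1 - \<alpha>) \<le> A"
    and "S \<alpha> n \<le> A / real n"
  shows "S \<alpha> (Suc n) \<le> A / real (Suc n)"
proof -
  have n_pos: "real n > 0" using \<open>n \<ge> 1\<close> by simp
  have half: "(1 - \<alpha>) * real n - \<alpha> \<ge> (1 - \<alpha>) * real n / 2"
    using n_large \<open>\<alpha> < 1\<close> by (simp add: field_simps)
  have key: "\<alpha> * real n \<le> A * ((1 - \<alpha>) * real n - \<alpha>)"
  proof -
    have "\<alpha> * real n = 2 * \<alpha> / (1 - \<alpha>) * ((1 - \<alpha>) * real n / 2)"
      using \<open>\<alpha> < 1\<close> by (simp add: field_simps)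
    also have "\<dots> \<le> A * ((1 - \<alpha>) * real n - \<alpha>)"
      using A_large half assms(1,2) n_pos
      by (intro mult_mono) (auto intro: order_trans[OF divide_nonneg_pos A_large])
    finally show ?thesis .
  qed
  have "S \<alpha> (Suc n) = \<alpha> * S \<alpha> n + \<alpha> / (real n + 1)"
    using S_Suc \<open>n \<ge> 1\<close> .
  also have "\<dots> \<le> \<alpha> * (A / real n) + \<alpha> / (real n + 1)"
    using mult_left_mono[OF \<open>S \<alpha> n \<le> A / real n\<close> \<open>0 \<le> \<alpha>\<close>] by simp
  also have "\<dots> = (\<alpha> * A * (real n + 1) + \<alpha> * real n) / (real n * (real n + 1))"
    using n_pos by (simp add: field_simps)
  also have "\<dots> \<le> A * real n / (real n * (real n + 1))"
    using key n_pos by (intro divide_right_mono) (auto simp: algebra_simps)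
  also have "\<dots> = A / real (Suc n)"
    using n_pos by simp
  finally show ?thesis .
qed

lemma S_le_div_from:
  fixes \<alpha> A :: real
  assumes "0 \<le> \<alpha>" "\<alpha> < 1" "t0 \<ge> 1"
    and "2 * \<alpha> / (1 - \<alpha>) \<le> real t0"
    and "2 * \<alpha> / (1 - \<alpha>) \<le> A"
    and "S \<alpha> t0 \<le> A / real t0"
    and "t \<ge> t0"
  shows "S \<alpha> t \<le> A / real t"
  using \<open>t \<ge> t0\<close>
proof (induction t rule: dec_induct)
  case base
  show ?case using assms(6) .
next
  case (step n)
  then show ?case
    using assms(1-5) by (intro S_Suc_le_if_S_le) auto
qed

theorem proposition1:
  fixes \<alpha> :: real
  assumes "0 < \<alpha>" and "\<alpha> < 1"
  defines "t0 \<equiv> nat \<lceil>2 * \<alpha> / (1 - \<alpha>)\<rceil>"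
  defines "A \<equiv> max (real t0 * S \<alpha> t0) (2 * \<alpha> / (1 - \<alpha>))"
  shows "\<forall>t::nat. t \<ge> t0 \<longrightarrow> S \<alpha> t \<le> A / real t"
proof (intro allI impI)
  fix t :: nat
  assume "t0 \<le> t"
  have c_pos: "2 * \<alpha> / (1 - \<alpha>) > 0" using assms(1,2) by simp
  have t0_large: "2 * \<alpha> / (1 - \<alpha>) \<le> real t0"
    unfolding t0_def by linarith
  then have "t0 \<ge> 1" using c_pos by linarith
  moreover have "S \<alpha> t0 \<le> A / real t0"
    using \<open>t0 \<ge> 1\<close> unfolding A_def by (simp add: field_simps)
  moreover have "2 * \<alpha> / (1 - \<alpha>) \<le> A"
    unfolding A_def by simp
  ultimately show "S \<alpha> t \<le> A / real t"
    using S_le_div_from assms(1,2) t0_large \<open>t0 \<le> t\<close> by simp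
qed

end
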